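(* Let $X$ be a K3 quartic surface, let $l\subset X$ be a line of singularity $0$, and suppose $l$ has a twin $l^*$. If $\Pi\supset l$ is a $p$-fiber of $l$, then $\Pi$ corresponds to a branch point of $\pi|_{\hat l}:\hat l\to\mathbb P^1$ (i.e. the fiber of $\pi$ corresponding to $\Pi$ is ramified for $\pi|_{\hat l}$).
   Context: $k$ is algebraically closed of characteristic $\neq 2,3$. A K3 quartic surface is a surface $X \subset \mathbb P^3_k$ of degree 4 whose only singularities are isolated rational double points; $\varphi:Z\to X$ is its minimal desingularization, $\hat C$ the strict transform. For a line $l\subset X$, the planes $\Pi_t\supset l$ cut residual cubics $E_t$ ($\Pi_t\cap X=l+E_t$) and induce an elliptic fibration $\pi:Z\to\mathbb P^1$. A line has singularity 0 if it contains no singular point of $X$ (then $\pi|_{\hat l}$ has degree 3). A plane $\Pi_t\supset l$ is a $p$-fiber of $l$ if $E_t$ splits into three (not necessarily distinct) lines. Two disjoint lines $l, l^*\subset X$ of singularity 0 are twin lines if there are exactly 10 lines on $X$ meeting both; equivalently, $X$ is projectively equivalent to a quartic $x_0 p_0(x_2,x_3)+x_1p_1(x_2,x_3)+x_2p_2(x_0,x_1)+x_3p_3(x_0,x_1)=0$ ($p_i$ binary cubic forms) with $l=\{x_0=x_1=0\}$, $l^*=\{x_2=x_3=0\}$. *)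

theory Defs
  imports "HOL-Library.Poly_Mapping" "HOL-Computational_Algebra.Polynomial"
begin

type_synonym 'k mpoly = "(nat \<Rightarrow>\<^sub>0 nat) \<Rightarrow>\<^sub>0 'k"

definition mp_const :: "'k::field \<Rightarrow> 'k mpoly" where
  "mp_const c = Poly_Mapping.single 0 c"

definition mp_var :: "nat \<Rightarrow> 'k::field mpoly" where
  "mp_var i = Poly_Mapping.single (Poly_Mapping.single i 1) 1"

definition mp_subst :: "'k::field mpoly \<Rightarrow> (nat \<Rightarrow> 'k mpoly) \<Rightarrow> 'k mpoly" where
  "mp_subst p q = (\<Sum>m\<in>Poly_Mapping.keys p. mp_const (Poly_Mapping.lookup p m) *
                      (\<Prod>i\<in>Poly_Mapping.keys m. q i ^ Poly_Mapping.lookup m i))"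

definition mp_eval :: "'k::field mpoly \<Rightarrow> (nat \<Rightarrow> 'k) \<Rightarrow> 'k" where
  "mp_eval p x = (\<Sum>m\<in>Poly_Mapping.keys p. Poly_Mapping.lookup p m * (\<Prod>i\<in>Poly_Mapping.keys m. x i ^ Poly_Mapping.lookup m i))"

definition quartic_form :: "'k::field mpoly \<Rightarrow> bool" where
  "quartic_form F \<longleftrightarrow> F \<noteq> 0 \<and>
     (\<forall>m\<in>Poly_Mapping.keys F. Poly_Mapping.keys m \<subseteq> {0..3} \<and> (\<Sum>i\<in>Poly_Mapping.keys m. Poly_Mapping.lookup m i) = 4)"

text \<open>Partial derivative dF/dx_i at P: the coefficient of t in F(P + t e_i).\<close>
definition pderiv_at :: "'k::field mpoly \<Rightarrow> nat \<Rightarrow> (nat \<Rightarrow> 'k) \<Rightarrow> 'k" where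
  "pderiv_at F i P =
     Poly_Mapping.lookup (mp_subst F (\<lambda>j. mp_const (P j) + (if j = i then mp_var 0 else 0)))
            (Poly_Mapping.single 0 1)"

definition proj_pt :: "(nat \<Rightarrow> 'k::field) \<Rightarrow> bool" where
  "proj_pt P \<longleftrightarrow> (\<exists>j<4. P j \<noteq> 0)"

definition sing_pt :: "'k::field mpoly \<Rightarrow> (nat \<Rightarrow> 'k) \<Rightarrow> bool" where
  "sing_pt F P \<longleftrightarrow> proj_pt P \<and> mp_eval F P = 0 \<and> (\<forall>i<4. pderiv_at F i P = 0)"

type_synonym 'k ps3 = "nat \<times> nat \<times> nat \<Rightarrow> 'k"

definition ps_mult :: "'k::field ps3 \<Rightarrow> 'k ps3 \<Rightarrow> 'k ps3" where
  "ps_mult f g = (\<lambda>(a,b,c). \<Sum>i\<le>a. \<Sum>j\<le>b. \<Sum>l\<le>c. f (i,j,l) * g (a-i, b-j, c-l))"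

definition ps_mono :: "nat \<times> nat \<times> nat \<Rightarrow> 'k::field ps3" where
  "ps_mono e = (\<lambda>m. if m = e then 1 else 0)"

definition ps_add :: "'k::field ps3 \<Rightarrow> 'k ps3 \<Rightarrow> 'k ps3" where
  "ps_add f g = (\<lambda>m. f m + g m)"

definition ps_pow :: "'k::field ps3 \<Rightarrow> nat \<Rightarrow> 'k ps3" where
  "ps_pow f n = ((ps_mult f) ^^ n) (ps_mono (0,0,0))"

text \<open>Composition f(phi0, phi1, phi2), meaningful when the phi_i have no constant term
  (then only finitely many terms contribute to each coefficient).\<close>
definition ps_comp :: "'k::field ps3 \<Rightarrow> 'k ps3 \<Rightarrow> 'k ps3 \<Rightarrow> 'k ps3 \<Rightarrow> 'k ps3" where
  "ps_comp f p0 p1 p2 = (\<lambda>(a,b,c).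
     \<Sum>i\<le>a+b+c. \<Sum>j\<le>a+b+c. \<Sum>l\<le>a+b+c.
       f (i,j,l) * ps_mult (ps_pow p0 i) (ps_mult (ps_pow p1 j) (ps_pow p2 l)) (a,b,c))"

definition ps_auto :: "'k::field ps3 \<Rightarrow> 'k ps3 \<Rightarrow> 'k ps3 \<Rightarrow> bool" where
  "ps_auto p0 p1 p2 \<longleftrightarrow> p0 (0,0,0) = 0 \<and> p1 (0,0,0) = 0 \<and> p2 (0,0,0) = 0 \<and>
     (let M = (\<lambda>r c. (if r = (0::nat) then p0 else if r = 1 then p1 else p2)
                      (if c = (0::nat) then (1,0,0) else if c = 1 then (0,1,0) else (0,0,1)))
      in M 0 0 * (M 1 1 * M 2 2 - M 1 2 * M 2 1)
       - M 0 1 * (M 1 0 * M 2 2 - M 1 2 * M 2 0)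
       + M 0 2 * (M 1 0 * M 2 1 - M 1 1 * M 2 0) \<noteq> 0)"

definition contact_equiv :: "'k::field ps3 \<Rightarrow> 'k ps3 \<Rightarrow> bool" where
  "contact_equiv f g \<longleftrightarrow> (\<exists>u p0 p1 p2. u (0,0,0) \<noteq> 0 \<and> ps_auto p0 p1 p2 \<and>
       f = ps_mult u (ps_comp g p0 p1 p2))"

text \<open>ADE normal forms (x = y0, y = y1, z = y2).  In characteristic 5 Artin's
  classification has the extra form E_8^1; it is included (for char <> 5 it is
  equivalent to E_8).\<close>
definition ADE_forms :: "'k::field ps3 set" where
  "ADE_forms =
     {ps_add (ps_mono (2,0,0)) (ps_add (ps_mono (0,2,0)) (ps_mono (0,0,n+1))) | n. n \<ge> 1}
   \<union> {ps_add (ps_mono (2,0,0)) (ps_add (ps_mono (0,2,1)) (ps_mono (0,0,n-1))) | n. n \<ge> 4}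
   \<union> {ps_add (ps_mono (2,0,0)) (ps_add (ps_mono (0,3,0)) (ps_mono (0,0,4))),
      ps_add (ps_mono (2,0,0)) (ps_add (ps_mono (0,3,0)) (ps_mono (0,1,3))),
      ps_add (ps_mono (2,0,0)) (ps_add (ps_mono (0,3,0)) (ps_mono (0,0,5))),
      ps_add (ps_mono (2,0,0)) (ps_add (ps_mono (0,3,0))
                  (ps_add (ps_mono (0,0,5)) (ps_mono (0,1,4))))}"

definition rational_double_point_germ :: "'k::field ps3 \<Rightarrow> bool" where
  "rational_double_point_germ f \<longleftrightarrow> (\<exists>N\<in>ADE_forms. contact_equiv f N)"

text \<open>Local equation of {F=0} at P in the affine chart x_i <> 0 (i with P i <> 0),
  the remaining three coordinates (in increasing order) becoming y0,y1,y2.\<close>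
definition local_germ :: "'k::field mpoly \<Rightarrow> (nat \<Rightarrow> 'k) \<Rightarrow> nat \<Rightarrow> 'k ps3" where
  "local_germ F P i = (\<lambda>(a,b,c).
     Poly_Mapping.lookup (mp_subst F (\<lambda>j. mp_const (P j) +
                (if j = i then 0 else mp_var (if j < i then j else j - 1))))
            (Poly_Mapping.single 0 a + Poly_Mapping.single 1 b + Poly_Mapping.single 2 c))"

definition K3_quartic :: "'k::field mpoly \<Rightarrow> bool" where
  "K3_quartic F \<longleftrightarrow> quartic_form F \<and>
     (\<forall>P. sing_pt F P \<longrightarrow> rational_double_point_germ (local_germ F P (LEAST i. P i \<noteq> 0)))"

definition bin_cubic :: "(nat \<Rightarrow> 'k::field) \<Rightarrow> nat \<Rightarrow> nat \<Rightarrow> 'k mpoly" where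
  "bin_cubic c u v = (\<Sum>j\<le>3. mp_const (c j) * mp_var u ^ (3 - j) * mp_var v ^ j)"

definition twin_normal_form ::
  "(nat \<Rightarrow> 'k::field) \<Rightarrow> (nat \<Rightarrow> 'k) \<Rightarrow> (nat \<Rightarrow> 'k) \<Rightarrow> (nat \<Rightarrow> 'k) \<Rightarrow> 'k mpoly" where
  "twin_normal_form c0 c1 c2 c3 =
      mp_var 0 * bin_cubic c0 2 3 + mp_var 1 * bin_cubic c1 2 3
    + mp_var 2 * bin_cubic c2 0 1 + mp_var 3 * bin_cubic c3 0 1"

definition coord_line_sing0 :: "'k::field mpoly \<Rightarrow> nat \<Rightarrow> nat \<Rightarrow> bool" where
  "coord_line_sing0 F i j \<longleftrightarrow> \<not> (\<exists>P. sing_pt F P \<and> P i = 0 \<and> P j = 0)"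

definition lin_form :: "(nat \<Rightarrow> 'k::field) \<Rightarrow> (nat \<Rightarrow> 'k) \<Rightarrow> 'k" where
  "lin_form w x = (\<Sum>j<4. w j * x j)"

text \<open>The plane Pi = {a x_0 + b x_1 = 0} containing l = {x_0 = x_1 = 0} is a p-fiber:
  the residual cubic E in Pi \<inter> X = l + E splits into three lines, i.e. F restricted to Pi
  is (equation of l in Pi) times a product of three linear forms, none vanishing on Pi.\<close>
definition p_fiber :: "'k::field mpoly \<Rightarrow> 'k \<Rightarrow> 'k \<Rightarrow> bool" where
  "p_fiber F a b \<longleftrightarrow> (\<exists>M0 L1 L2 L3.
      M0 2 = 0 \<and> M0 3 = 0 \<and>
      (\<forall>w\<in>{M0, L1, L2, L3}. \<exists>x. a * x 0 + b * x 1 = 0 \<and> lin_form w x \<noteq> 0) \<and>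
      (\<forall>x. a * x 0 + b * x 1 = 0 \<longrightarrow>
           mp_eval F x = lin_form M0 x * lin_form L1 x * lin_form L2 x * lin_form L3 x))"

definition pt_on_l :: "'k::field \<Rightarrow> 'k \<Rightarrow> nat \<Rightarrow> 'k" where
  "pt_on_l y z = (\<lambda>j. if j = 2 then y else if j = 3 then z else 0)"

text \<open>For l = {x_0 = x_1 = 0} of singularity 0, pi restricted to l sends P in l to its
  tangent plane dF/dx_0(P) x_0 + dF/dx_1(P) x_1 = 0.  The fiber over the plane
  a x_0 + b x_1 = 0 is the zero set on l of the binary cubic
  b dF/dx_0 - a dF/dx_1; the plane is a branch point iff that fiber has a multiple point,
  i.e. the binary cubic has a repeated linear factor (v y - u z)^2.\<close>
definition branch_plane :: "'k::field mpoly \<Rightarrow> 'k \<Rightarrow> 'k \<Rightarrow> bool" where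
  "branch_plane F a b \<longleftrightarrow> (\<exists>u v r s. (u, v) \<noteq> (0, 0) \<and>
     (\<forall>y z. b * pderiv_at F 0 (pt_on_l y z) - a * pderiv_at F 1 (pt_on_l y z)
            = (v * y - u * z)^2 * (r * y + s * z)))"

definition alg_closed_field :: "'k::field itself \<Rightarrow> bool" where
  "alg_closed_field _ \<longleftrightarrow> (\<forall>p::'k poly. degree p > 0 \<longrightarrow> (\<exists>x. poly p x = 0))"

end

theory Submission
  imports Defs
begin

text \<open>On the plane \<open>a x\<^sub>0 + b x\<^sub>1 = 0\<close>, parametrised as \<open>(b t, -a t, y, z)\<close>, the twin normal
  form restricts to \<open>t Q(y,z) + t\<^sup>3 (\<alpha> y + \<beta> z)\<close>, where \<open>Q = b C\<^sub>0 - a C\<^sub>1\<close> is the binary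
  cubic whose zeros on \<open>l\<close> form the fibre of \<open>\<pi>|l\<close> over the plane, and \<open>\<alpha> = C\<^sub>2(b,-a)\<close>,
  \<open>\<beta> = C\<^sub>3(b,-a)\<close> do not both vanish, since otherwise \<open>(b : -a : 0 : 0)\<close> would be a singular
  point on \<open>l*\<close>. If the plane is a p-fiber, the restriction factors as
  \<open>\<mu> t (A\<^sub>1 t + l\<^sub>1) (A\<^sub>2 t + l\<^sub>2) (A\<^sub>3 t + l\<^sub>3)\<close> with linear forms \<open>l\<^sub>i(y,z)\<close>. Comparing
  coefficients of \<open>t\<close> over the infinite field \<open>k\<close>: the \<open>t\<^sup>4\<close> coefficient forces some \<open>A\<^sub>i = 0\<close>,
  say \<open>A\<^sub>3\<close>; the \<open>t\<^sup>3\<close> coefficient gives \<open>\<mu> A\<^sub>1 A\<^sub>2 l\<^sub>3 = \<alpha> y + \<beta> z \<noteq> 0\<close>; the \<open>t\<^sup>2\<close>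
  coefficient gives \<open>l\<^sub>3 (A\<^sub>1 l\<^sub>2 + A\<^sub>2 l\<^sub>1) = 0\<close>, so \<open>l\<^sub>2\<close> is a multiple of \<open>l\<^sub>1\<close> and
  \<open>Q = \<mu> l\<^sub>1 l\<^sub>2 l\<^sub>3\<close> has the double factor \<open>l\<^sub>1\<^sup>2\<close>.

  Of the hypotheses only algebraic closedness (through the infinitude of \<open>k\<close>), the
  singularity-0 condition on \<open>l*\<close> and the p-fiber property are needed.\<close>

definition monomial_value :: "(nat \<Rightarrow>\<^sub>0 nat) \<Rightarrow> (nat \<Rightarrow> 'r::comm_ring_1) \<Rightarrow> 'r" where
  "monomial_value m x = (\<Prod>i\<in>Poly_Mapping.keys m. x i ^ Poly_Mapping.lookup m i)"

definition hom_eval :: "('k::field \<Rightarrow> 'r::comm_ring_1) \<Rightarrow> (nat \<Rightarrow> 'r) \<Rightarrow> 'k mpoly \<Rightarrow> 'r" where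
  "hom_eval f x p = (\<Sum>m\<in>Poly_Mapping.keys p. f (Poly_Mapping.lookup p m) * monomial_value m x)"

lemma mp_eval_eq_hom_eval: "mp_eval p x = hom_eval (\<lambda>c. c) x p"
  by (simp add: mp_eval_def hom_eval_def monomial_value_def)

lemma mp_subst_eq_hom_eval: "mp_subst p q = hom_eval mp_const q p"
  by (simp add: mp_subst_def hom_eval_def monomial_value_def)

lemma monomial_value_superset:
  assumes "finite S" "Poly_Mapping.keys m \<subseteq> S"
  shows "monomial_value m x = (\<Prod>i\<in>S. x i ^ Poly_Mapping.lookup m i)"
  unfolding monomial_value_def
  by (rule prod.mono_neutral_left) (use assms in \<open>auto simp: in_keys_iff\<close>)

lemma monomial_value_add: "monomial_value (m + n) x = monomial_value m x * monomial_value n x"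
proof -
  let ?S = "Poly_Mapping.keys m \<union> Poly_Mapping.keys n"
  have "monomial_value (m + n) x = (\<Prod>i\<in>?S. x i ^ Poly_Mapping.lookup (m + n) i)"
    by (rule monomial_value_superset) (auto dest: set_mp[OF keys_add])
  also have "\<dots> = (\<Prod>i\<in>?S. x i ^ Poly_Mapping.lookup m i) * (\<Prod>i\<in>?S. x i ^ Poly_Mapping.lookup n i)"
    by (simp add: lookup_add power_add prod.distrib)
  also have "\<dots> = monomial_value m x * monomial_value n x"
    by (subst (1 2) monomial_value_superset[of ?S]) auto
  finally show ?thesis .
qed

lemma monomial_value_0 [simp]: "monomial_value 0 x = 1"
  by (simp add: monomial_value_def)

lemma monomial_value_single [simp]: "monomial_value (Poly_Mapping.single i k) x = x i ^ k"
  by (cases "k = 0") (simp_all add: monomial_value_def)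

lemma poly_mapping_sum_single_lookup:
  "p = (\<Sum>m\<in>Poly_Mapping.keys p. Poly_Mapping.single m (Poly_Mapping.lookup p m))"
  by (rule poly_mapping_eqI) (auto simp: lookup_sum lookup_single when_def in_keys_iff)

locale coeff_hom =
  fixes f :: "'k::field \<Rightarrow> 'r::comm_ring_1"
  assumes hom_0: "f 0 = 0" and hom_1: "f 1 = 1"
    and hom_add: "f (a + b) = f a + f b" and hom_mult: "f (a * b) = f a * f b"
begin

lemma hom_eval_0 [simp]: "hom_eval f x 0 = 0"
  by (simp add: hom_eval_def)

lemma hom_eval_add: "hom_eval f x (p + q) = hom_eval f x p + hom_eval f x q"
  unfolding hom_eval_def
  by (rule setsum_keys_plus_distrib) (simp_all add: hom_0 hom_add algebra_simps)

lemma hom_eval_single [simp]: "hom_eval f x (Poly_Mapping.single m c) = f c * monomial_value m x"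
  by (cases "c = 0") (simp_all add: hom_eval_def hom_0)

lemma hom_eval_sum: "hom_eval f x (sum g A) = (\<Sum>a\<in>A. hom_eval f x (g a))"
  by (induction A rule: infinite_finite_induct) (simp_all add: hom_eval_add)

lemma hom_eval_mult: "hom_eval f x (p * q) = hom_eval f x p * hom_eval f x q"
proof -
  have "p * q = (\<Sum>m\<in>Poly_Mapping.keys p. \<Sum>n\<in>Poly_Mapping.keys q.
      Poly_Mapping.single (m + n) (Poly_Mapping.lookup p m * Poly_Mapping.lookup q n))"
    by (subst (1 2) poly_mapping_sum_single_lookup)
       (simp add: sum_distrib_left sum_distrib_right mult_single sum.swap[where B = "Poly_Mapping.keys p"])
  then have "hom_eval f x (p * q) = (\<Sum>m\<in>Poly_Mapping.keys p. \<Sum>n\<in>Poly_Mapping.keys q.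
      f (Poly_Mapping.lookup p m) * monomial_value m x * (f (Poly_Mapping.lookup q n) * monomial_value n x))"
    by (simp add: hom_eval_sum hom_mult monomial_value_add algebra_simps)
  also have "\<dots> = hom_eval f x p * hom_eval f x q"
    by (simp add: hom_eval_def sum_product)
  finally show ?thesis .
qed

lemma hom_eval_1 [simp]: "hom_eval f x 1 = 1"
  using hom_eval_single[of x 0 1] by (simp add: hom_1)

lemma hom_eval_power: "hom_eval f x (p ^ n) = hom_eval f x p ^ n"
  by (induction n) (simp_all add: hom_eval_mult)

lemma hom_eval_const [simp]: "hom_eval f x (mp_const c) = f c"
  by (simp add: mp_const_def)

lemma hom_eval_var [simp]: "hom_eval f x (mp_var i) = x i"
  by (simp add: mp_var_def hom_1)

end

definition bin_cubic_val :: "(nat \<Rightarrow> 'r::comm_ring_1) \<Rightarrow> 'r \<Rightarrow> 'r \<Rightarrow> 'r" where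
  "bin_cubic_val c u v = c 0 * u ^ 3 + c 1 * u\<^sup>2 * v + c 2 * u * v\<^sup>2 + c 3 * v ^ 3"

lemma (in coeff_hom) hom_eval_bin_cubic:
  "hom_eval f x (bin_cubic c u v) = bin_cubic_val (f \<circ> c) (x u) (x v)"
proof -
  have "hom_eval f x (bin_cubic c u v) = (\<Sum>j\<le>3. f (c j) * x u ^ (3 - j) * x v ^ j)"
    by (simp add: bin_cubic_def hom_eval_sum hom_eval_mult hom_eval_power)
  then show ?thesis
    by (simp add: bin_cubic_val_def numeral_3_eq_3 numeral_2_eq_2 atMost_Suc)
qed

lemma (in coeff_hom) hom_eval_twin_normal_form:
  "hom_eval f x (twin_normal_form c0 c1 c2 c3) =
     x 0 * bin_cubic_val (f \<circ> c0) (x 2) (x 3) + x 1 * bin_cubic_val (f \<circ> c1) (x 2) (x 3)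
   + x 2 * bin_cubic_val (f \<circ> c2) (x 0) (x 1) + x 3 * bin_cubic_val (f \<circ> c3) (x 0) (x 1)"
  by (simp add: twin_normal_form_def hom_eval_add hom_eval_mult hom_eval_bin_cubic)

interpretation id_eval: coeff_hom "\<lambda>c::'k::field. c"
  by unfold_locales simp_all

interpretation const_eval: coeff_hom "mp_const :: 'k::field \<Rightarrow> 'k mpoly"
  by unfold_locales (simp_all add: mp_const_def single_add mult_single)

lemma mp_eval_twin_normal_form:
  "mp_eval (twin_normal_form c0 c1 c2 c3) x =
     x 0 * bin_cubic_val c0 (x 2) (x 3) + x 1 * bin_cubic_val c1 (x 2) (x 3)
   + x 2 * bin_cubic_val c2 (x 0) (x 1) + x 3 * bin_cubic_val c3 (x 0) (x 1)"
  by (simp add: mp_eval_eq_hom_eval id_eval.hom_eval_twin_normal_form comp_def)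

lemma mp_const_mult [simp]: "mp_const a * mp_const b = mp_const (a * b)"
  by (simp add: mp_const_def mult_single)

lemma mp_const_add [simp]: "mp_const a + mp_const b = mp_const (a + b)"
  by (simp add: mp_const_def single_add)

lemma mp_const_power [simp]: "mp_const a ^ n = mp_const (a ^ n)"
  by (induction n) (simp_all add: mp_const_def mult_single)

lemma mp_const_0 [simp]: "mp_const 0 = 0"
  by (simp add: mp_const_def)

lemma lookup_mp_const_mult [simp]:
  "Poly_Mapping.lookup (mp_const c * p) m = c * Poly_Mapping.lookup p m"
  by (simp add: mp_const_def mult_map_scale_conv_mult[symmetric] map.rep_eq when_def)

lemma lookup_mult_mp_const [simp]:
  "Poly_Mapping.lookup (p * mp_const c) m = c * Poly_Mapping.lookup p m"
  by (metis lookup_mp_const_mult mult.commute)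

lemma mp_var_power: "mp_var i ^ n = Poly_Mapping.single (Poly_Mapping.single i n) (1::'k::field)"
  by (induction n) (simp_all add: mp_var_def mult_single single_add[symmetric])

text \<open>The simplifier rewrites \<^term>\<open>1::nat\<close> to \<^term>\<open>Suc 0\<close> here, so the linear monomial is
  written \<^term>\<open>Poly_Mapping.single i (Suc 0)\<close> to keep these rules applicable.\<close>

lemma lookup_mp_var_power_linear [simp]:
  "Poly_Mapping.lookup (mp_var i ^ n) (Poly_Mapping.single i (Suc 0)) = (if n = Suc 0 then 1::'k::field else 0)"
  unfolding mp_var_power lookup_single when_def by (metis inj_single injD)

lemma lookup_mp_var_linear [simp]:
  "Poly_Mapping.lookup (mp_var i) (Poly_Mapping.single i (Suc 0)) = (1::'k::field)"
  using lookup_mp_var_power_linear[of i 1] by simp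

definition pt_on_l_star :: "'k::field \<Rightarrow> 'k \<Rightarrow> nat \<Rightarrow> 'k" where
  "pt_on_l_star u v = (\<lambda>j. if j = 0 then u else if j = 1 then v else 0)"

lemma pderiv_twin_normal_form_on_l:
  "pderiv_at (twin_normal_form c0 c1 c2 c3) 0 (pt_on_l y z) = bin_cubic_val c0 y z"
  "pderiv_at (twin_normal_form c0 c1 c2 c3) 1 (pt_on_l y z) = bin_cubic_val c1 y z"
  by (simp_all add: pderiv_at_def mp_subst_eq_hom_eval const_eval.hom_eval_twin_normal_form
      bin_cubic_val_def pt_on_l_def lookup_add)

lemma pderiv_twin_normal_form_on_l_star:
  "pderiv_at (twin_normal_form c0 c1 c2 c3) 0 (pt_on_l_star u v) = 0"
  "pderiv_at (twin_normal_form c0 c1 c2 c3) 1 (pt_on_l_star u v) = 0"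
  "pderiv_at (twin_normal_form c0 c1 c2 c3) 2 (pt_on_l_star u v) = bin_cubic_val c2 u v"
  "pderiv_at (twin_normal_form c0 c1 c2 c3) 3 (pt_on_l_star u v) = bin_cubic_val c3 u v"
  by (simp_all add: pderiv_at_def mp_subst_eq_hom_eval const_eval.hom_eval_twin_normal_form
      bin_cubic_val_def pt_on_l_star_def lookup_add)

lemma alg_closed_field_infinite:
  assumes "alg_closed_field TYPE('k::field)"
  shows "infinite (UNIV :: 'k set)"
proof
  assume fin: "finite (UNIV :: 'k set)"
  define q :: "'k poly" where "q = (\<Prod>a\<in>UNIV. [:-a, 1:])"
  have "degree q = card (UNIV :: 'k set)"
    by (simp add: q_def degree_prod_eq_sum_degree)
  then have "degree q > 0"
    using fin by (simp add: finite_UNIV_card_ge_0)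
  then have "degree (1 + q) > 0"
    by (simp add: degree_add_eq_right)
  then obtain x where "poly (1 + q) x = 0"
    using assms unfolding alg_closed_field_def by blast
  moreover have "poly q x = 0"
    using fin by (simp add: q_def poly_prod)
  ultimately show False by simp
qed

lemma quartic_coeffs_eq_0_if_vanishes:
  fixes c0 c1 c2 c3 c4 :: "'k::field"
  assumes "infinite (UNIV :: 'k set)"
    and vanish: "\<And>t. c0 + c1 * t + c2 * t\<^sup>2 + c3 * t ^ 3 + c4 * t ^ 4 = 0"
  shows "c0 = 0 \<and> c1 = 0 \<and> c2 = 0 \<and> c3 = 0 \<and> c4 = 0"
proof -
  define p where "p = [:c0, c1, c2, c3, c4:]"
  have "poly p t = 0" for t
    using vanish[of t] by (simp add: p_def algebra_simps power_numeral_reduce)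
  then have "p = 0"
    using assms(1) poly_roots_finite[of p] by auto
  then show ?thesis by (simp add: p_def)
qed

definition has_double_linear_factor :: "('k::field \<Rightarrow> 'k \<Rightarrow> 'k) \<Rightarrow> bool" where
  "has_double_linear_factor Q \<longleftrightarrow>
     (\<exists>u v r s. (u, v) \<noteq> (0, 0) \<and> (\<forall>y z. Q y z = (v * y - u * z)\<^sup>2 * (r * y + s * z)))"

lemma branch_plane_iff_has_double_linear_factor:
  "branch_plane F a b \<longleftrightarrow>
     has_double_linear_factor (\<lambda>y z. b * pderiv_at F 0 (pt_on_l y z) - a * pderiv_at F 1 (pt_on_l y z))"
  by (simp add: branch_plane_def has_double_linear_factor_def)

lemma has_double_linear_factorI:
  fixes p q r s :: "'k::field"
  assumes "\<And>y z. Q y z = (p * y + q * z)\<^sup>2 * (r * y + s * z)"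
  shows "has_double_linear_factor Q"
proof (cases "(p, q) = (0, 0)")
  case True
  then have "(1::'k, 0::'k) \<noteq> (0, 0) \<and> (\<forall>y z. Q y z = (0 * y - 1 * z)\<^sup>2 * (0 * y + 0 * z))"
    using assms by simp
  then show ?thesis
    unfolding has_double_linear_factor_def by blast
next
  case False
  then have "(- q, p) \<noteq> (0, 0) \<and> (\<forall>y z. Q y z = (p * y - (- q) * z)\<^sup>2 * (r * y + s * z))"
    using assms by auto
  then show ?thesis
    unfolding has_double_linear_factor_def by blast
qed

lemma linear_forms_mult_eq_0:
  fixes p q g h :: "'k::field"
  assumes "\<And>y z. (p * y + q * z) * (g * y + h * z) = 0" and "(p, q) \<noteq> (0, 0)"
  shows "g = 0 \<and> h = 0"
proof -
  have "p * g = 0" "q * h = 0" "(p + q) * (g + h) = 0"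
    using assms(1)[of 1 0] assms(1)[of 0 1] assms(1)[of 1 1] by simp_all
  have "p * h + q * g = (p + q) * (g + h) - p * g - q * h"
    by (simp add: algebra_simps)
  also have "\<dots> = 0"
    by (simp only: \<open>p * g = 0\<close> \<open>q * h = 0\<close> \<open>(p + q) * (g + h) = 0\<close> diff_self)
  finally have "p * h + q * g = 0" .
  then show ?thesis
    using \<open>p * g = 0\<close> \<open>q * h = 0\<close> assms(2) by (cases "p = 0") auto
qed

lemma has_double_linear_factor_if_restriction_factors_t_free:
  fixes \<mu> \<alpha> \<beta> A1 A2 p1 q1 p2 q2 p3 q3 :: "'k::field"
  assumes inf: "infinite (UNIV :: 'k set)" and "\<mu> \<noteq> 0" and "\<alpha> \<noteq> 0 \<or> \<beta> \<noteq> 0"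
    and fac: "\<And>t y z. t * Q y z + t ^ 3 * (\<alpha> * y + \<beta> * z) =
      \<mu> * t * (A1 * t + p1 * y + q1 * z) * (A2 * t + p2 * y + q2 * z) * (p3 * y + q3 * z)"
  shows "has_double_linear_factor Q"
proof -
  have coeffs: "Q y z = \<mu> * (p1 * y + q1 * z) * (p2 * y + q2 * z) * (p3 * y + q3 * z) \<and>
      \<mu> * (p3 * y + q3 * z) * (A1 * (p2 * y + q2 * z) + A2 * (p1 * y + q1 * z)) = 0 \<and>
      \<alpha> * y + \<beta> * z = \<mu> * A1 * A2 * (p3 * y + q3 * z)" for y z
  proof -
    have "0 + (Q y z - \<mu> * (p1 * y + q1 * z) * (p2 * y + q2 * z) * (p3 * y + q3 * z)) * t
        + (- \<mu> * (p3 * y + q3 * z) * (A1 * (p2 * y + q2 * z) + A2 * (p1 * y + q1 * z))) * t\<^sup>2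
        + (\<alpha> * y + \<beta> * z - \<mu> * A1 * A2 * (p3 * y + q3 * z)) * t ^ 3 + 0 * t ^ 4 = 0" for t
      using fac[of t y z] by (simp add: algebra_simps power2_eq_square power3_eq_cube)
    from quartic_coeffs_eq_0_if_vanishes[OF inf this] show ?thesis
      by simp
  qed
  have "\<alpha> = \<mu> * A1 * A2 * p3" "\<beta> = \<mu> * A1 * A2 * q3"
    using coeffs[of 1 0] coeffs[of 0 1] by simp_all
  then have "A1 \<noteq> 0" "A2 \<noteq> 0" "(p3, q3) \<noteq> (0, 0)"
    using \<open>\<alpha> \<noteq> 0 \<or> \<beta> \<noteq> 0\<close> by auto
  have "(p3 * y + q3 * z) * ((A1 * p2 + A2 * p1) * y + (A1 * q2 + A2 * q1) * z) = 0" for y z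
  proof -
    have "(A1 * p2 + A2 * p1) * y + (A1 * q2 + A2 * q1) * z = A1 * (p2 * y + q2 * z) + A2 * (p1 * y + q1 * z)"
      by (simp add: algebra_simps)
    then show ?thesis
      using coeffs[of y z] \<open>\<mu> \<noteq> 0\<close> by simp
  qed
  then have "A1 * p2 + A2 * p1 = 0 \<and> A1 * q2 + A2 * q1 = 0"
    using \<open>(p3, q3) \<noteq> (0, 0)\<close> by (rule linear_forms_mult_eq_0)
  moreover define k where "k = - A2 / A1"
  moreover have "X = k * Y" if "A1 * X + A2 * Y = 0" for X Y
    using that \<open>A1 \<noteq> 0\<close> by (simp add: k_def field_simps eq_neg_iff_add_eq_0)
  ultimately have "p2 = k * p1" "q2 = k * q1"
    by auto
  then have "Q y z = (p1 * y + q1 * z)\<^sup>2 * ((\<mu> * k * p3) * y + (\<mu> * k * q3) * z)" for y z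
    using coeffs[of y z] by (simp add: algebra_simps power2_eq_square)
  then show ?thesis
    by (rule has_double_linear_factorI)
qed

lemma has_double_linear_factor_if_restriction_factors:
  fixes \<mu> \<alpha> \<beta> A1 A2 A3 p1 q1 p2 q2 p3 q3 :: "'k::field"
  assumes inf: "infinite (UNIV :: 'k set)" and "\<mu> \<noteq> 0" and \<alpha>\<beta>: "\<alpha> \<noteq> 0 \<or> \<beta> \<noteq> 0"
    and fac: "\<And>t y z. t * Q y z + t ^ 3 * (\<alpha> * y + \<beta> * z) =
      \<mu> * t * (A1 * t + p1 * y + q1 * z) * (A2 * t + p2 * y + q2 * z) * (A3 * t + p3 * y + q3 * z)"
  shows "has_double_linear_factor Q"
proof -
  have "0 + Q 0 0 * t + 0 * t\<^sup>2 + 0 * t ^ 3 + (- \<mu> * A1 * A2 * A3) * t ^ 4 = 0" for t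
    using fac[of t 0 0] by (simp add: algebra_simps power_numeral_reduce)
  from quartic_coeffs_eq_0_if_vanishes[OF inf this] have "\<mu> * A1 * A2 * A3 = 0"
    by simp
  then consider "A1 = 0" | "A2 = 0" | "A3 = 0"
    using \<open>\<mu> \<noteq> 0\<close> by auto
  then show ?thesis
  proof cases
    case 1
    have "t * Q y z + t ^ 3 * (\<alpha> * y + \<beta> * z) =
        \<mu> * t * (A2 * t + p2 * y + q2 * z) * (A3 * t + p3 * y + q3 * z) * (p1 * y + q1 * z)" for t y z
      using fac[of t y z] 1 by (simp add: ac_simps)
    then show ?thesis
      by (rule has_double_linear_factor_if_restriction_factors_t_free[OF inf \<open>\<mu> \<noteq> 0\<close> \<alpha>\<beta>])
  next
    case 2
    have "t * Q y z + t ^ 3 * (\<alpha> * y + \<beta> * z) =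
        \<mu> * t * (A1 * t + p1 * y + q1 * z) * (A3 * t + p3 * y + q3 * z) * (p2 * y + q2 * z)" for t y z
      using fac[of t y z] 2 by (simp add: ac_simps)
    then show ?thesis
      by (rule has_double_linear_factor_if_restriction_factors_t_free[OF inf \<open>\<mu> \<noteq> 0\<close> \<alpha>\<beta>])
  next
    case 3
    have "t * Q y z + t ^ 3 * (\<alpha> * y + \<beta> * z) =
        \<mu> * t * (A1 * t + p1 * y + q1 * z) * (A2 * t + p2 * y + q2 * z) * (p3 * y + q3 * z)" for t y z
      using fac[of t y z] 3 by simp
    then show ?thesis
      by (rule has_double_linear_factor_if_restriction_factors_t_free[OF inf \<open>\<mu> \<noteq> 0\<close> \<alpha>\<beta>])
  qed
qed

definition plane_point :: "'k::field \<Rightarrow> 'k \<Rightarrow> 'k \<Rightarrow> 'k \<Rightarrow> 'k \<Rightarrow> nat \<Rightarrow> 'k" where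
  "plane_point a b t y z = (\<lambda>j. if j = 0 then b * t else if j = 1 then - a * t else if j = 2 then y else z)"

lemma lin_form_expand: "lin_form w x = w 0 * x 0 + w 1 * x 1 + w 2 * x 2 + w 3 * x 3"
  by (simp add: lin_form_def numeral_eq_Suc lessThan_Suc)

lemma lin_form_plane_point:
  "lin_form w (plane_point a b t y z) = (b * w 0 - a * w 1) * t + w 2 * y + w 3 * z"
  by (simp add: lin_form_expand plane_point_def algebra_simps)

lemma p_fiber_restriction_factors:
  fixes a b :: "'k::field"
  assumes "(a, b) \<noteq> (0, 0)" and "p_fiber F a b"
  obtains \<mu> A1 p1 q1 A2 p2 q2 A3 p3 q3 where "\<mu> \<noteq> 0"
    and "\<And>t y z. mp_eval F (plane_point a b t y z) =
      \<mu> * t * (A1 * t + p1 * y + q1 * z) * (A2 * t + p2 * y + q2 * z) * (A3 * t + p3 * y + q3 * z)"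
proof -
  obtain M0 L1 L2 L3 where "M0 2 = 0" "M0 3 = 0"
    and M0_nonzero: "\<exists>x. a * x 0 + b * x 1 = 0 \<and> lin_form M0 x \<noteq> 0"
    and fac: "\<And>x. a * x 0 + b * x 1 = 0 \<Longrightarrow>
      mp_eval F x = lin_form M0 x * lin_form L1 x * lin_form L2 x * lin_form L3 x"
    using assms(2) unfolding p_fiber_def by blast
  define \<mu> where "\<mu> = b * M0 0 - a * M0 1"
  have "\<mu> \<noteq> 0"
  proof
    assume "\<mu> = 0"
    from M0_nonzero obtain x where on_plane: "a * x 0 + b * x 1 = 0" and "lin_form M0 x \<noteq> 0"
      by blast
    have "a * lin_form M0 x = M0 0 * (a * x 0 + b * x 1) - x 1 * \<mu>"
      by (simp add: lin_form_expand \<open>M0 2 = 0\<close> \<open>M0 3 = 0\<close> \<mu>_def algebra_simps)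
    also have "\<dots> = 0"
      by (simp only: on_plane \<open>\<mu> = 0\<close> mult_zero_left mult_zero_right diff_zero)
    finally have "a * lin_form M0 x = 0" .
    have "b * lin_form M0 x = M0 1 * (a * x 0 + b * x 1) + x 0 * \<mu>"
      by (simp add: lin_form_expand \<open>M0 2 = 0\<close> \<open>M0 3 = 0\<close> \<mu>_def algebra_simps)
    also have "\<dots> = 0"
      by (simp only: on_plane \<open>\<mu> = 0\<close> mult_zero_left mult_zero_right add_0_right)
    finally have "b * lin_form M0 x = 0" .
    with \<open>a * lin_form M0 x = 0\<close> \<open>lin_form M0 x \<noteq> 0\<close> assms(1) show False
      by simp
  qed
  moreover have "mp_eval F (plane_point a b t y z) =
      \<mu> * t * ((b * L1 0 - a * L1 1) * t + L1 2 * y + L1 3 * z)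
        * ((b * L2 0 - a * L2 1) * t + L2 2 * y + L2 3 * z)
        * ((b * L3 0 - a * L3 1) * t + L3 2 * y + L3 3 * z)" for t y z
    using fac[of "plane_point a b t y z"]
    by (simp add: lin_form_plane_point \<mu>_def \<open>M0 2 = 0\<close> \<open>M0 3 = 0\<close>)
      (simp add: plane_point_def algebra_simps)
  ultimately show ?thesis
    by (rule that)
qed

lemma mp_eval_twin_normal_form_plane_point:
  "mp_eval (twin_normal_form c0 c1 c2 c3) (plane_point a b t y z) =
     t * (b * bin_cubic_val c0 y z - a * bin_cubic_val c1 y z)
   + t ^ 3 * (bin_cubic_val c2 b (- a) * y + bin_cubic_val c3 b (- a) * z)"
  by (simp add: mp_eval_twin_normal_form plane_point_def bin_cubic_val_def algebra_simps
      power2_eq_square power3_eq_cube)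

lemma twin_cubics_no_common_zero_if_l_star_sing0:
  assumes "coord_line_sing0 (twin_normal_form c0 c1 c2 c3) 2 3" and "(u, v) \<noteq> (0, 0)"
  shows "bin_cubic_val c2 u v \<noteq> 0 \<or> bin_cubic_val c3 u v \<noteq> 0"
proof (rule ccontr)
  assume "\<not> (bin_cubic_val c2 u v \<noteq> 0 \<or> bin_cubic_val c3 u v \<noteq> 0)"
  then have "pderiv_at (twin_normal_form c0 c1 c2 c3) i (pt_on_l_star u v) = 0" if "i < 4" for i
    using that pderiv_twin_normal_form_on_l_star[of c0 c1 c2 c3 u v]
    by (auto simp: less_Suc_eq numeral_eq_Suc)
  moreover have "proj_pt (pt_on_l_star u v)"
    using assms(2) by (auto simp: proj_pt_def pt_on_l_star_def)
  moreover have "mp_eval (twin_normal_form c0 c1 c2 c3) (pt_on_l_star u v) = 0"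
    by (simp add: mp_eval_twin_normal_form pt_on_l_star_def bin_cubic_val_def)
  ultimately have "sing_pt (twin_normal_form c0 c1 c2 c3) (pt_on_l_star u v)"
    by (simp add: sing_pt_def)
  moreover have "pt_on_l_star u v 2 = 0" "pt_on_l_star u v 3 = 0"
    by (simp_all add: pt_on_l_star_def)
  ultimately show False
    using assms(1) unfolding coord_line_sing0_def by blast
qed

theorem corollary3p6:
  fixes c0 c1 c2 c3 :: "nat \<Rightarrow> 'k::field" and a b :: 'k
  assumes "alg_closed_field TYPE('k)"
    and "(2::'k) \<noteq> 0" and "(3::'k) \<noteq> 0"
    and "K3_quartic (twin_normal_form c0 c1 c2 c3)"
    and "coord_line_sing0 (twin_normal_form c0 c1 c2 c3) 0 1"
    and "coord_line_sing0 (twin_normal_form c0 c1 c2 c3) 2 3"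
    and "(a, b) \<noteq> (0, 0)"
    and "p_fiber (twin_normal_form c0 c1 c2 c3) a b"
  shows "branch_plane (twin_normal_form c0 c1 c2 c3) a b"
proof -
  define Q where "Q = (\<lambda>y z. b * bin_cubic_val c0 y z - a * bin_cubic_val c1 y z)"
  obtain \<mu> A1 p1 q1 A2 p2 q2 A3 p3 q3 where "\<mu> \<noteq> 0"
    and fac: "\<And>t y z. mp_eval (twin_normal_form c0 c1 c2 c3) (plane_point a b t y z) =
      \<mu> * t * (A1 * t + p1 * y + q1 * z) * (A2 * t + p2 * y + q2 * z) * (A3 * t + p3 * y + q3 * z)"
    using p_fiber_restriction_factors[OF assms(7,8)] by blast
  have "bin_cubic_val c2 b (- a) \<noteq> 0 \<or> bin_cubic_val c3 b (- a) \<noteq> 0"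
    using twin_cubics_no_common_zero_if_l_star_sing0[OF assms(6)] assms(7) by auto
  moreover have "t * Q y z + t ^ 3 * (bin_cubic_val c2 b (- a) * y + bin_cubic_val c3 b (- a) * z) =
      \<mu> * t * (A1 * t + p1 * y + q1 * z) * (A2 * t + p2 * y + q2 * z) * (A3 * t + p3 * y + q3 * z)" for t y z
    using fac[of t y z] by (simp add: mp_eval_twin_normal_form_plane_point Q_def)
  ultimately have "has_double_linear_factor Q"
    by (rule has_double_linear_factor_if_restriction_factors
        [OF alg_closed_field_infinite[OF assms(1)] \<open>\<mu> \<noteq> 0\<close>])
  then show ?thesis
    unfolding branch_plane_iff_has_double_linear_factor pderiv_twin_normal_form_on_l Q_def .
qed

end
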